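(* Let $(p_m)$ be a sequence of primes with $p_m\to\infty$, and let $c_m=(c_{m,1},\dots,c_{m,b})\in\mathbb{F}_{p_m}^b$. Assume that for every nonzero rational vector $(\alpha_1,\dots,\alpha_b)$, for almost all $m$ it is not the case that $\sum_{i=1}^b\alpha_ic_{m,i}=0$ in $\mathbb{F}_{p_m}$. Let $U$ be a nonempty open subset of $\mathbb{T}^b$, let $k\in\mathbb{N}$ and $l\in(\mathbb{Z}/k\mathbb{Z})^*$. Then for arbitrarily large $m$ there is $e_m\in\mathbb{N}$ with $e_m\equiv l\pmod k$ and $\Psi_{p_m}(e_mc_m)\in U$.
   Context: $\mathbb{T}=\{z\in\mathbb{C}:|z|=1\}$; $\Psi_p(n+p\mathbb{Z})=\exp(2\pi i n/p)$ is the standard additive character of $\mathbb{F}_p$, applied coordinatewise to tuples. *)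

theory Defs
  imports "HOL-Analysis.Analysis" "HOL-Number_Theory.Number_Theory"
begin

definition torus :: "(complex ^ 'b) set" where
  "torus = {z. \<forall>i. norm (z $ i) = 1}"

definition Psi :: "nat \<Rightarrow> int \<Rightarrow> complex" where
  "Psi p n = exp (2 * complex_of_real pi * \<i> * of_int n / of_nat p)"

text \<open>Image of a rational number a/d (reduced, d > 0) in F_p, as an integer representative
  a * d^(-1) mod p. Meaningful when p does not divide d.\<close>
definition rat_mod :: "nat \<Rightarrow> rat \<Rightarrow> int" where
  "rat_mod p q = (case quotient_of q of (a, d) \<Rightarrow> a * (SOME y. [d * y = 1] (mod int p)))"

definition rat_comb_zero_mod :: "nat \<Rightarrow> ('b::finite \<Rightarrow> rat) \<Rightarrow> ('b \<Rightarrow> int) \<Rightarrow> bool" where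
  "rat_comb_zero_mod p \<alpha> c \<longleftrightarrow> [(\<Sum>i\<in>UNIV. rat_mod p (\<alpha> i) * c i) = 0] (mod int p)"

end

theory Submission
  imports Defs "HOL-Real_Asymp.Real_Asymp"
begin

(* Write the target point as u = (cis a_i) and consider the trigonometric polynomial
   G(x) = prod_i ((1 + cos (x_i - a_i)) / 2)^N on the torus, which is at most (1 - eta/2)^N
   unless every coordinate of x is close to a_i. Its frequencies are the integer vectors J with
   |J_i| <= N, so averaging G over the orbit x = 2 pi e c / p (e < p) picks out exactly the
   frequencies with sum_i J_i c_i = 0 mod p. By the hypothesis on the c_m, for large m only
   J = 0 survives, so the average equals the constant term binom(2N,N)^b / 4^(N b), which decays
   only polynomially in N and hence beats (1 - eta/2)^N for N large. Thus some e < p lands near u,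
   and since p is coprime to k, e can be moved into the class l mod k by adding multiples of p. *)

lemma Psi_cis: "Psi q n = cis (2 * pi * of_int n / real q)"
  by (simp add: Psi_def cis_conv_exp mult_ac)

lemma Psi_add: "Psi q (x + y) = Psi q x * Psi q y"
  by (simp add: Psi_cis cis_mult add_divide_distrib distrib_left)

lemma Psi_cong:
  assumes "[x = y] (mod int q)"
  shows "Psi q x = Psi q y"
proof -
  obtain s where "x = y + int q * s"
    using assms by (metis cong_iff_lin cong_sym)
  moreover have "Psi q (int q * s) = 1"
    by (cases "q = 0") (simp_all add: Psi_cis, metis cis_multiple_2pi Ints_of_int mult.assoc)
  ultimately show ?thesis
    by (simp add: Psi_add)
qed

lemma sum_Psi_multiples_eq_0:
  assumes "q > 0" "\<not> int q dvd h"
  shows "(\<Sum>e<q. Psi q (int e * h)) = 0"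
proof -
  have pow: "Psi q (int e * h) = Psi q h ^ e" for e
  proof (induction e)
    case (Suc e)
    then show ?case
      by (simp add: ring_distribs Psi_add)
  qed (simp add: Psi_def)
  have "Psi q h ^ q = 1"
    using assms(1) by (simp add: Psi_cis Complex.DeMoivre)
  moreover have "Psi q h \<noteq> 1"
  proof
    assume "Psi q h = 1"
    then have "cos (2 * pi * of_int h / real q) = 1"
      by (metis Psi_cis cis.sel(1) one_complex.sel(1))
    then obtain n :: int where "2 * pi * of_int h / real q = of_int n * 2 * pi"
      using cos_one_2pi_int by blast
    then have "real_of_int h = of_int (n * int q)"
      using assms(1) by (simp add: field_simps)
    then show False
      using assms(2) by (metis dvd_triv_right mult.commute of_int_eq_iff)
  qed
  ultimately show ?thesis
    by (simp add: pow geometric_sum)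
qed

lemma prod_cis: "finite A \<Longrightarrow> (\<Prod>i\<in>A. cis (f i)) = cis (\<Sum>i\<in>A. f i)"
  by (induction A rule: finite_induct) (auto simp: cis_mult)

lemma norm_cis_diff_squared: "cmod (cis x - cis y) ^ 2 = 2 - 2 * cos (x - y)"
proof -
  have "cmod (cis x - cis y) ^ 2 = (cos x - cos y) ^ 2 + (sin x - sin y) ^ 2"
    by (simp add: cmod_power2)
  also have "\<dots> = (sin x ^ 2 + cos x ^ 2) + (sin y ^ 2 + cos y ^ 2) - 2 * (cos x * cos y + sin x * sin y)"
    by (simp add: power2_eq_square algebra_simps)
  also have "\<dots> = 2 - 2 * cos (x - y)"
    by (simp add: cos_diff)
  finally show ?thesis .
qed

definition cos_kernel :: "nat \<Rightarrow> real \<Rightarrow> real" where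
  "cos_kernel N t = ((1 + cos t) / 2) ^ N"

(* Only meaningful for |j| <= N: below -N the truncating nat gives 1 / 4^N instead of 0. *)
definition kernel_coeff :: "nat \<Rightarrow> int \<Rightarrow> real" where
  "kernel_coeff N j = real (2 * N choose nat (j + int N)) / 4 ^ N"

definition freq_box :: "nat \<Rightarrow> ('b \<Rightarrow> int) set" where
  "freq_box N = (\<Pi>\<^sub>E i\<in>UNIV. {-int N..int N})"

definition no_small_relation_mod :: "nat \<Rightarrow> nat \<Rightarrow> ('b::finite \<Rightarrow> int) \<Rightarrow> bool" where
  "no_small_relation_mod q N c \<longleftrightarrow>
     (\<forall>J\<in>freq_box N - {\<lambda>_. 0}. \<not> int q dvd (\<Sum>i\<in>UNIV. J i * c i))"

lemma finite_freq_box: "finite (freq_box N :: ('b::finite \<Rightarrow> int) set)"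
  unfolding freq_box_def by (intro finite_PiE) auto

lemma cos_kernel_expansion:
  "complex_of_real (cos_kernel N t) =
     (\<Sum>j=-int N..int N. complex_of_real (kernel_coeff N j) * cis (of_int j * t))"
proof -
  have cos_half: "complex_of_real (cos (t/2)) = (cis (t/2) + cis (-(t/2))) / 2"
    by (simp add: complex_eq_iff)
  have "complex_of_real (cos_kernel N t) = ((cis (t/2) + cis (-(t/2))) / 2) ^ (2*N)"
    unfolding cos_half[symmetric] using cos_double_cos[of "t/2"]
    by (simp add: cos_kernel_def power_mult)
  also have "\<dots> = (cis (t/2) + cis (-(t/2))) ^ (2*N) / 4 ^ N"
    by (simp add: power_divide power_mult)
  also have "\<dots> = (\<Sum>j\<le>2*N. of_nat (2*N choose j) * cis (t/2)^j * cis (-(t/2))^(2*N-j)) / 4^N"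
    by (simp add: binomial_ring)
  also have "\<dots> = (\<Sum>j\<le>2*N. complex_of_real (kernel_coeff N (int j - int N)) * cis (of_int (int j - int N) * t))"
    unfolding sum_divide_distrib
  proof (rule sum.cong[OF refl])
    fix j assume "j \<in> {..2*N}"
    then have "cis (t/2)^j * cis (-(t/2))^(2*N-j) = cis (of_int (int j - int N) * t)"
      unfolding Complex.DeMoivre cis_mult by (intro arg_cong[where f=cis]) (simp add: of_nat_diff algebra_simps)
    then show "of_nat (2*N choose j) * cis (t/2)^j * cis (-(t/2))^(2*N-j) / 4^N =
       complex_of_real (kernel_coeff N (int j - int N)) * cis (of_int (int j - int N) * t)"
      by (simp add: kernel_coeff_def mult.assoc)
  qed
  also have "\<dots> = (\<Sum>j=-int N..int N. complex_of_real (kernel_coeff N j) * cis (of_int j * t))"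
    by (rule sum.reindex_bij_witness[where i = "\<lambda>j. nat (j + int N)" and j = "\<lambda>j. int j - int N"]) auto
  finally show ?thesis .
qed

lemma sum_prod_cos_kernel_multiples:
  fixes c :: "'b::finite \<Rightarrow> int" and a :: "'b \<Rightarrow> real"
  assumes "q > 0" and "no_small_relation_mod q N c"
  shows "(\<Sum>e<q. \<Prod>i\<in>UNIV. cos_kernel N (2 * pi * real e * of_int (c i) / real q - a i))
           = real q * kernel_coeff N 0 ^ CARD('b)"
proof -
  define \<theta> where "\<theta> e i = 2 * pi * real e * of_int (c i) / real q - a i" for e i
  define h where "h J = (\<Sum>i\<in>UNIV. J i * c i)" for J :: "'b \<Rightarrow> int"
  define w where "w J = complex_of_real (\<Prod>i\<in>UNIV. kernel_coeff N (J i))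
                          * cis (- (\<Sum>i\<in>UNIV. of_int (J i) * a i))" for J :: "'b \<Rightarrow> int"
  have expand: "complex_of_real (\<Prod>i\<in>UNIV. cos_kernel N (\<theta> e i))
                  = (\<Sum>J\<in>freq_box N. w J * Psi q (int e * h J))" for e
  proof -
    have "complex_of_real (\<Prod>i\<in>UNIV. cos_kernel N (\<theta> e i))
            = (\<Prod>i\<in>UNIV. \<Sum>j=-int N..int N. complex_of_real (kernel_coeff N j) * cis (of_int j * \<theta> e i))"
      by (simp add: cos_kernel_expansion)
    also have "\<dots> = (\<Sum>J\<in>freq_box N. \<Prod>i\<in>UNIV.
                        complex_of_real (kernel_coeff N (J i)) * cis (of_int (J i) * \<theta> e i))"
      unfolding freq_box_def by (rule prod_sum_PiE) auto
    also have "\<dots> = (\<Sum>J\<in>freq_box N. w J * Psi q (int e * h J))"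
    proof (rule sum.cong[OF refl])
      fix J :: "'b \<Rightarrow> int"
      have "(\<Sum>i\<in>UNIV. of_int (J i) * \<theta> e i)
              = 2 * pi * of_int (int e * h J) / real q - (\<Sum>i\<in>UNIV. of_int (J i) * a i)"
        by (simp add: \<theta>_def h_def right_diff_distrib sum_subtractf sum_distrib_left sum_divide_distrib mult_ac)
      then show "(\<Prod>i\<in>UNIV. complex_of_real (kernel_coeff N (J i)) * cis (of_int (J i) * \<theta> e i))
                   = w J * Psi q (int e * h J)"
        by (simp add: w_def Psi_cis prod.distrib prod_cis cis_mult mult_ac)
    qed
    finally show ?thesis .
  qed
  have "complex_of_real (\<Sum>e<q. \<Prod>i\<in>UNIV. cos_kernel N (\<theta> e i))
          = (\<Sum>J\<in>freq_box N. w J * (\<Sum>e<q. Psi q (int e * h J)))"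
    unfolding of_real_sum expand by (subst sum.swap) (simp add: sum_distrib_left)
  also have "\<dots> = w (\<lambda>_. 0) * (\<Sum>e<q. Psi q (int e * h (\<lambda>_. 0)))"
  proof -
    have zero_in: "(\<lambda>_. 0) \<in> freq_box N"
      by (auto simp: freq_box_def)
    have "(\<Sum>J\<in>freq_box N - {\<lambda>_. 0}. w J * (\<Sum>e<q. Psi q (int e * h J))) = 0"
      using assms by (simp add: no_small_relation_mod_def h_def sum_Psi_multiples_eq_0)
    then show ?thesis
      unfolding sum.remove[OF finite_freq_box zero_in] by simp
  qed
  also have "\<dots> = complex_of_real (real q * kernel_coeff N 0 ^ CARD('b))"
    by (simp add: w_def h_def Psi_def)
  finally show ?thesis
    unfolding \<theta>_def of_real_eq_iff .
qed

lemma prod_cos_kernel_le: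
  fixes t :: "'b::finite \<Rightarrow> real"
  assumes "cos (t i) \<le> 1 - \<eta>"
  shows "(\<Prod>j\<in>UNIV. cos_kernel N (t j)) \<le> (1 - \<eta> / 2) ^ N"
proof -
  have base: "0 \<le> (1 + cos s) / 2 \<and> (1 + cos s) / 2 \<le> 1" for s :: real
    using cos_ge_minus_one[of s] cos_le_one[of s] by argo
  then have bounds: "0 \<le> cos_kernel N s" "cos_kernel N s \<le> 1" for s
    by (simp_all add: cos_kernel_def power_le_one)
  have "(\<Prod>j\<in>UNIV. cos_kernel N (t j)) = cos_kernel N (t i) * (\<Prod>j\<in>UNIV - {i}. cos_kernel N (t j))"
    by (rule prod.remove) simp_all
  also have "\<dots> \<le> (1 - \<eta> / 2) ^ N * 1"
  proof (rule mult_mono)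
    show "cos_kernel N (t i) \<le> (1 - \<eta> / 2) ^ N"
      unfolding cos_kernel_def by (rule power_mono) (use base[of "t i"] assms in argo)+
    show "(\<Prod>j\<in>UNIV - {i}. cos_kernel N (t j)) \<le> 1"
      using bounds by (intro prod_le_1) auto
    show "0 \<le> (1 - \<eta> / 2) ^ N"
      using base[of "t i"] assms by simp
    show "0 \<le> (\<Prod>j\<in>UNIV - {i}. cos_kernel N (t j))"
      using bounds by (intro prod_nonneg) auto
  qed
  finally show ?thesis
    by simp
qed

lemma exists_pow_less_kernel_coeff_pow:
  fixes r :: real
  assumes "0 < r" "r < 1"
  shows "\<exists>N. r ^ N < kernel_coeff N 0 ^ B"
proof -
  have lim: "(\<lambda>N. (2 * real N) ^ B * r ^ N) \<longlonglongrightarrow> 0"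
    using assms by real_asymp
  have "eventually (\<lambda>N. (2 * real N) ^ B * r ^ N < 1 \<and> N > 0) sequentially"
    using order_tendstoD(2)[OF lim, of 1] eventually_gt_at_top[of 0]
    by (auto intro: eventually_conj)
  then obtain N where N: "(2 * real N) ^ B * r ^ N < 1" "N > 0"
    by (auto simp: eventually_sequentially)
  have "r ^ N < (1 / (2 * real N)) ^ B"
    using N by (simp add: power_one_over field_simps)
  also have "\<dots> \<le> kernel_coeff N 0 ^ B"
  proof (rule power_mono)
    show "1 / (2 * real N) \<le> kernel_coeff N 0"
      using central_binomial_lower_bound[OF N(2)] by (simp add: kernel_coeff_def field_simps)
  qed (use N in auto)
  finally show ?thesis ..
qed

lemma exists_multiple_near_angles:
  fixes c :: "'b::finite \<Rightarrow> int" and a :: "'b \<Rightarrow> real"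
  assumes "q > 0" and "no_small_relation_mod q N c"
    and "(1 - \<eta> / 2) ^ N < kernel_coeff N 0 ^ CARD('b)"
  shows "\<exists>e<q. \<forall>i. 1 - \<eta> < cos (2 * pi * real e * of_int (c i) / real q - a i)"
proof (rule ccontr)
  assume far: "\<not> ?thesis"
  then have "(\<Prod>i\<in>UNIV. cos_kernel N (2 * pi * real e * of_int (c i) / real q - a i)) \<le> (1 - \<eta> / 2) ^ N"
    if "e < q" for e
  proof -
    obtain i where "cos (2 * pi * real e * of_int (c i) / real q - a i) \<le> 1 - \<eta>"
      using far \<open>e < q\<close> by (meson not_less)
    then show ?thesis
      by (rule prod_cos_kernel_le)
  qed
  then have "(\<Sum>e<q. \<Prod>i\<in>UNIV. cos_kernel N (2 * pi * real e * of_int (c i) / real q - a i))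
               \<le> (\<Sum>e<q. (1 - \<eta> / 2) ^ N)"
    by (intro sum_mono) simp
  then show False
    using sum_prod_cos_kernel_multiples[OF assms(1,2), of a] assms(1,3) by simp
qed

lemma exists_Psi_multiple_near:
  fixes c :: "'b::finite \<Rightarrow> int" and u :: "complex ^ 'b"
  assumes "q > 0" and "u \<in> torus" and "\<delta> > 0"
    and "no_small_relation_mod q N c"
    and "(1 - \<delta>\<^sup>2 / 4) ^ N < kernel_coeff N 0 ^ CARD('b)"
  shows "\<exists>e::nat. \<forall>i. cmod (Psi q (int e * c i) - u $ i) < \<delta>"
proof -
  define a where "a i = Arg (u $ i)" for i
  have u: "u $ i = cis (a i)" for i
    using assms(2) rcis_cmod_Arg[of "u $ i"] by (simp add: torus_def rcis_def a_def)
  obtain e where e: "\<forall>i. 1 - \<delta>\<^sup>2 / 2 < cos (2 * pi * real e * of_int (c i) / real q - a i)"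
    using exists_multiple_near_angles[OF assms(1,4), of "\<delta>\<^sup>2 / 2" a] assms(5) by auto
  have "cmod (Psi q (int e * c i) - u $ i) < \<delta>" for i
  proof -
    have "cmod (Psi q (int e * c i) - u $ i) ^ 2 = 2 - 2 * cos (2 * pi * real e * of_int (c i) / real q - a i)"
      by (simp add: Psi_cis u norm_cis_diff_squared mult.assoc)
    also have "\<dots> < \<delta>\<^sup>2"
      using e by (simp add: field_simps)
    finally show ?thesis
      by (rule power2_less_imp_less) (use assms(3) in simp)
  qed
  then show ?thesis
    by blast
qed

lemma torus_coordinatewise_neighbourhood:
  fixes U :: "(complex ^ 'b::finite) set"
  assumes "openin (top_of_set torus) U" and "u \<in> U"
  obtains \<delta> where "0 < \<delta>" "\<delta> \<le> 1"
    and "\<And>z. z \<in> torus \<Longrightarrow> (\<forall>i. cmod (z $ i - u $ i) < \<delta>) \<Longrightarrow> z \<in> U"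
proof -
  obtain \<epsilon> where \<epsilon>: "\<epsilon> > 0" "\<forall>z\<in>torus. dist z u < \<epsilon> \<longrightarrow> z \<in> U"
    using assms by (force simp: openin_euclidean_subtopology_iff)
  define \<delta> where "\<delta> = min \<epsilon> 1 / CARD('b)"
  show thesis
  proof
    have "1 \<le> real CARD('b)"
      by (simp add: Suc_le_eq)
    then show "0 < \<delta>" "\<delta> \<le> 1"
      using \<epsilon>(1) by (simp_all add: \<delta>_def divide_le_eq min_le_iff_disj)
  next
    fix z assume z: "z \<in> torus" "\<forall>i. cmod (z $ i - u $ i) < \<delta>"
    have "dist z u \<le> (\<Sum>i\<in>UNIV. cmod (z $ i - u $ i))"
      unfolding dist_norm norm_vec_def by (rule order_trans[OF L2_set_le_sum]) auto
    also have "\<dots> < (\<Sum>i\<in>(UNIV::'b set). \<delta>)"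
      using z(2) by (intro sum_strict_mono) auto
    also have "\<dots> \<le> \<epsilon>"
      by (simp add: \<delta>_def)
    finally show "z \<in> U"
      using \<epsilon>(2) z(1) by blast
  qed
qed

lemma rat_comb_zero_mod_of_int:
  fixes a c :: "'b::finite \<Rightarrow> int"
  assumes "int p dvd (\<Sum>i\<in>UNIV. a i * c i)"
  shows "rat_comb_zero_mod p (\<lambda>i. of_int (a i)) c"
proof -
  define s where "s = (SOME y. [1 * y = 1] (mod int p))"
  have s: "[s = 1] (mod int p)"
    unfolding s_def by (rule someI2[of _ 1]) auto
  have "rat_mod p (of_int n) = n * s" for n
    by (simp add: rat_mod_def quotient_of_int s_def)
  then have "[(\<Sum>i\<in>UNIV. rat_mod p (of_int (a i)) * c i) = (\<Sum>i\<in>UNIV. a i * 1 * c i)] (mod int p)"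
    by (simp only:) (intro cong_sum cong_mult cong_refl s)
  also have "[(\<Sum>i\<in>UNIV. a i * 1 * c i) = 0] (mod int p)"
    using assms by (simp add: cong_0_iff)
  finally show ?thesis
    unfolding rat_comb_zero_mod_def .
qed

lemma eventually_not_dvd_int_combinations:
  fixes p :: "nat \<Rightarrow> nat" and c :: "nat \<Rightarrow> 'b::finite \<Rightarrow> int"
  assumes "\<And>\<alpha> :: 'b \<Rightarrow> rat. (\<exists>i. \<alpha> i \<noteq> 0) \<Longrightarrow>
             eventually (\<lambda>m. \<not> rat_comb_zero_mod (p m) \<alpha> (c m)) sequentially"
    and "finite S" and "(\<lambda>_. 0) \<notin> S"
  shows "eventually (\<lambda>m. \<forall>J\<in>S. \<not> int (p m) dvd (\<Sum>i\<in>UNIV. J i * c m i)) sequentially"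
proof (rule eventually_ball_finite[OF assms(2)], rule ballI)
  fix J assume "J \<in> S"
  then have "J \<noteq> (\<lambda>_. 0)"
    using assms(3) by blast
  then obtain i where "J i \<noteq> 0"
    by (meson ext)
  then have "\<exists>i. rat_of_int (J i) \<noteq> 0"
    by auto
  from assms(1)[OF this]
  show "eventually (\<lambda>m. \<not> int (p m) dvd (\<Sum>i\<in>UNIV. J i * c m i)) sequentially"
    by (rule eventually_mono) (use rat_comb_zero_mod_of_int in blast)
qed

lemma exists_nat_cong_pair:
  assumes "coprime (int q) (int k)" and "q > 0" "k > 0"
  obtains e :: nat where "[int e = x] (mod int q)" "[int e = l] (mod int k)"
proof -
  obtain y where y: "[y = x] (mod int q)" "[y = l] (mod int k)"
    using binary_chinese_remainder_int[OF assms(1)] by blast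
  define e where "e = nat (y mod (int q * int k))"
  have "int e = y mod (int q * int k)"
    using assms(2,3) by (simp add: e_def)
  then have "[int e = y] (mod int q)" "[int e = y] (mod int k)"
    by (simp_all add: cong_def mod_mod_cancel)
  then show thesis
    using y by (meson cong_trans that)
qed

lemma exists_exponent_in_class_near:
  fixes c :: "'b::finite \<Rightarrow> int" and u :: "complex ^ 'b"
  assumes "prime q" "k < q" "0 < k" and "u \<in> torus" "\<delta> > 0"
    and "no_small_relation_mod q N c"
    and "(1 - \<delta>\<^sup>2 / 4) ^ N < kernel_coeff N 0 ^ CARD('b)"
  obtains e :: nat where "[int e = l] (mod int k)" "\<forall>i. cmod (Psi q (int e * c i) - u $ i) < \<delta>"
proof -
  have "q > 0"
    using assms(1) prime_gt_0_nat by blast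
  obtain e where e: "\<forall>i. cmod (Psi q (int e * c i) - u $ i) < \<delta>"
    using exists_Psi_multiple_near[OF \<open>q > 0\<close> assms(4-7)] by blast
  have "\<not> q dvd k"
    using assms(2,3) by (auto dest: dvd_imp_le)
  then have "coprime (int q) (int k)"
    using prime_imp_coprime[OF assms(1)] by simp
  then obtain e' :: nat where e': "[int e' = int e] (mod int q)" "[int e' = l] (mod int k)"
    using exists_nat_cong_pair[OF _ \<open>q > 0\<close> assms(3)] by blast
  have "Psi q (int e' * c i) = Psi q (int e * c i)" for i
    by (intro Psi_cong cong_mult e'(1) cong_refl)
  then show thesis
    using that e e'(2) by simp
qed

theorem lemma3p9:
  fixes p :: "nat \<Rightarrow> nat" and c :: "nat \<Rightarrow> 'b::finite \<Rightarrow> int"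
    and U :: "(complex ^ 'b) set" and k :: nat and l :: int
  assumes "\<And>m. prime (p m)"
    and "filterlim p at_top sequentially"
    and "\<And>\<alpha> :: 'b \<Rightarrow> rat. (\<exists>i. \<alpha> i \<noteq> 0) \<Longrightarrow>
            eventually (\<lambda>m. \<not> rat_comb_zero_mod (p m) \<alpha> (c m)) sequentially"
    and "openin (top_of_set torus) U" and "U \<noteq> {}"
    and "k > 0" and "coprime l (int k)"
  shows "frequently (\<lambda>m. \<exists>e::nat. [int e = l] (mod int k) \<and>
            (\<chi> i. Psi (p m) (int e * c m i)) \<in> U) sequentially"
proof -
  obtain u where u: "u \<in> U"
    using assms(5) by blast
  then have "u \<in> torus"
    using openin_imp_subset[OF assms(4)] by blast
  obtain \<delta> where \<delta>: "0 < \<delta>" "\<delta> \<le> 1"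
    and near_U: "\<And>z. z \<in> torus \<Longrightarrow> (\<forall>i. cmod (z $ i - u $ i) < \<delta>) \<Longrightarrow> z \<in> U"
    using torus_coordinatewise_neighbourhood[OF assms(4) u] by blast
  have "0 < \<delta>\<^sup>2" "\<delta>\<^sup>2 \<le> 1"
    using \<delta> by (simp_all add: power_le_one)
  then obtain N where N: "(1 - \<delta>\<^sup>2 / 4) ^ N < kernel_coeff N 0 ^ CARD('b)"
    using exists_pow_less_kernel_coeff_pow[of "1 - \<delta>\<^sup>2 / 4" "CARD('b)"] by auto
  have "eventually (\<lambda>m. no_small_relation_mod (p m) N (c m)) sequentially"
    unfolding no_small_relation_mod_def
    by (rule eventually_not_dvd_int_combinations[OF assms(3)]) (simp_all add: finite_freq_box)
  moreover have "eventually (\<lambda>m. k < p m) sequentially"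
    using eventually_compose_filterlim[OF eventually_gt_at_top assms(2)] .
  ultimately have "eventually (\<lambda>m. \<exists>e::nat. [int e = l] (mod int k) \<and>
                      (\<chi> i. Psi (p m) (int e * c m i)) \<in> U) sequentially"
  proof eventually_elim
    case (elim m)
    obtain e where e: "[int e = l] (mod int k)" "\<forall>i. cmod (Psi (p m) (int e * c m i) - u $ i) < \<delta>"
      using exists_exponent_in_class_near[OF assms(1) elim(2) assms(6) \<open>u \<in> torus\<close> \<delta>(1) elim(1) N] .
    have "(\<chi> i. Psi (p m) (int e * c m i)) \<in> U"
      using e(2) by (intro near_U) (simp_all add: torus_def Psi_cis)
    with e(1) show ?case
      by blast
  qed
  then show ?thesis
    by (rule eventually_frequently[OF sequentially_bot])
qed

end
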